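(* Let $g:\mathbb{R}^N\to\mathbb{R}\cup\{+\infty\}$ be proper and lower semi-continuous, and let $f:\mathbb{R}^N\to\mathbb{R}$ be continuously differentiable such that, for some $\mathbf{L}\in\mathbb{S}_{++}(N)$, the gradient of $f\circ\mathbf{L}^{-1/2}$ is $1$-Lipschitz continuous; assume $f+g$ is bounded from below. Suppose $f(x)=\frac12\langle x,\mathbf{H}x\rangle+\langle b,x\rangle+c$ with $\mathbf{H}\in\mathbb{S}_{++}(N)$, $b\in\mathbb{R}^N$, $c\in\mathbb{R}$. Let $x_k\in\mathbb{R}^N$, $d\in\mathbb{R}^N\setminus\{0\}$, and for $\beta\in\mathbb{R}$ put $y^{(\beta)}:=x_k+\beta d$. Let $\mathbf{T}\in\mathbb{S}_{++}(N)$ be such that $\mathbf{M}:=\mathbf{T}-\mathbf{H}\in\mathbb{S}_{++}(N)$, and consider $$\min_{x\in\mathbb{R}^N}\min_{\beta\in\mathbb{R}}\ \ell(x;y^{(\beta)})+\tfrac12\|x-y^{(\beta)}\|_{\mathbf{T}}^2,\qquad \ell(x;y):=g(x)+f(y)+\langle\nabla f(y),x-y\rangle.\quad(\ast)$$ Then, for each fixed $x$, the inner minimization over $\beta$ is solved by $$\beta^*=\frac{\langle d,x-x_k\rangle_{\mathbf{M}}}{\langle d,d\rangle_{\mathbf{M}}},$$ and problem $(\ast)$ is equivalent to $$x_{k+1}\in\operatorname*{argmin}_{x\in\mathbb{R}^N}\ g(x)+\tfrac12\big\|x-x_k+\mathbf{Q}^{-1}\nabla f(x_k)\big\|_{\mathbf{Q}}^2,$$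 where $$\mathbf{Q}:=\mathbf{T}-uu^\top,\quad u:=\frac{\mathbf{M}d}{\|d\|_{\mathbf{M}}},\quad \mathbf{Q}^{-1}=\mathbf{T}^{-1}+\frac{\mathbf{T}^{-1}uu^\top\mathbf{T}^{-1}}{1-u^\top\mathbf{T}^{-1}u}.$$
   Context: $\mathbb{S}_{++}(N)$ denotes the set of symmetric positive definite $N\times N$ real matrices. For a matrix $\mathbf{V}$, $\|x\|_{\mathbf{V}}^2:=\langle x,\mathbf{V}x\rangle$ and $\langle x,y\rangle_{\mathbf{V}}:=\langle x,\mathbf{V}y\rangle$, with $\langle\cdot,\cdot\rangle$ the standard Euclidean inner product. "Equivalent" means the $x$-components of minimizers of $(\ast)$ are exactly the minimizers of the stated problem. *)

theory Defs
  imports "HOL-Analysis.Analysis"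
begin

definition spd :: "real^'n^'n \<Rightarrow> bool" where
  "spd A \<longleftrightarrow> transpose A = A \<and> (\<forall>x. x \<noteq> 0 \<longrightarrow> 0 < x \<bullet> (A *v x))"

definition winner :: "real^'n^'n \<Rightarrow> real^'n \<Rightarrow> real^'n \<Rightarrow> real" where
  "winner V x y = x \<bullet> (V *v y)"

definition wnorm2 :: "real^'n^'n \<Rightarrow> real^'n \<Rightarrow> real" where
  "wnorm2 V x = x \<bullet> (V *v x)"

definition outer :: "real^'n \<Rightarrow> real^'n \<Rightarrow> real^'n^'n" where
  "outer u v = (\<chi> i j. u $ i * v $ j)"

definition grad :: "(real^'n \<Rightarrow> real) \<Rightarrow> real^'n \<Rightarrow> real^'n" where
  "grad f x = (THE D. GDERIV f x :> D)"

definition proper_fun :: "('a \<Rightarrow> ereal) \<Rightarrow> bool" where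
  "proper_fun g \<longleftrightarrow> (\<forall>x. g x \<noteq> -\<infinity>) \<and> (\<exists>x. g x \<noteq> \<infinity>)"

definition lsc_fun :: "('a::topological_space \<Rightarrow> ereal) \<Rightarrow> bool" where
  "lsc_fun g \<longleftrightarrow> (\<forall>x. g x \<le> Liminf (at x) g)"

definition lin_model :: "(real^'n \<Rightarrow> ereal) \<Rightarrow> (real^'n \<Rightarrow> real) \<Rightarrow> real^'n \<Rightarrow> real^'n \<Rightarrow> ereal" where
  "lin_model g f x y = g x + ereal (f y + grad f y \<bullet> (x - y))"

end

theory Submission
  imports Defs
begin

(* Since f is quadratic, its linearization at y plus (1/2)|x - y|_T^2 equals
   f x + (1/2)|x - y|_M^2 with M = T - H.  So for fixed x the minimization over beta is a
   one-dimensional least-squares problem in the M-norm, solved by the M-projection coefficient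
   beta*, with value f x + (1/2)(|w|_M^2 - <d,w>_M^2 / |d|_M^2) where w = x - xk.  Expanding f
   around xk turns this into f xk + <grad f xk, w> + (1/2)|w|_Q^2, which differs from
   (1/2)|w + Q^-1 grad f xk|_Q^2 only by a constant.  Q = H + (M - u u^T) is positive definite
   because M - u u^T is positive semidefinite by Cauchy-Schwarz for the M-inner product, and its
   inverse is the Sherman-Morrison formula. *)

lemma transpose_outer: "transpose (outer u v) = outer v u"
  by (simp add: vec_eq_iff outer_def transpose_def mult.commute)

lemma outer_mult_vector: "outer u v *v w = (v \<bullet> w) *\<^sub>R u"
  by (simp add: vec_eq_iff outer_def matrix_vector_mult_def inner_vec_def sum_distrib_left ac_simps)

lemma symmetric_inner_commute:
  fixes A :: "real^'n^'n"
  assumes "transpose A = A"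
  shows "x \<bullet> (A *v y) = y \<bullet> (A *v x)"
  by (metis assms dot_lmul_matrix inner_commute transpose_matrix_vector)

lemma matrix_inv_eqI:
  fixes A B :: "'a::field^'n^'n"
  assumes "A ** B = mat 1"
  shows "matrix_inv A = B"
  unfolding matrix_inv_def
proof (rule some_equality)
  have BA: "B ** A = mat 1" using assms matrix_left_right_inverse by blast
  then show "A ** B = mat 1 \<and> B ** A = mat 1" using assms by simp
  fix C assume "A ** C = mat 1 \<and> C ** A = mat 1"
  then show "C = B" by (metis BA matrix_mul_assoc matrix_mul_lid matrix_mul_rid)
qed

lemma matrix_inv_cancel:
  fixes A :: "'a::field^'n^'n"
  assumes "invertible A"
  shows "A *v (matrix_inv A *v x) = x"
proof -
  obtain B where "A ** B = mat 1" using assms invertible_right_inverse by blast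
  then show ?thesis by (metis matrix_inv_eqI matrix_vector_mul_assoc matrix_vector_mul_lid)
qed

lemma spd_invertible:
  fixes A :: "real^'n^'n"
  assumes "spd A"
  shows "invertible A"
proof -
  have "\<forall>x. A *v x = 0 \<longrightarrow> x = 0"
    using assms unfolding spd_def by (metis inner_zero_right less_irrefl)
  then show ?thesis using matrix_left_invertible_ker invertible_left_inverse by blast
qed

lemma matrix_inv_minus_outer:
  fixes T :: "real^'n^'n"
  assumes T: "invertible T" and Q: "invertible (T - outer u v)"
  defines "Ti \<equiv> matrix_inv T"
  shows "matrix_inv (T - outer u v) = Ti + (1 / (1 - v \<bullet> (Ti *v u))) *\<^sub>R (Ti ** outer u v ** Ti)"
proof (rule matrix_inv_eqI)
  define \<alpha> where "\<alpha> = v \<bullet> (Ti *v u)"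
  have TTi: "T *v (Ti *v z) = z" for z
    unfolding Ti_def using T by (rule matrix_inv_cancel)
  have Qmv: "(T - outer u v) *v z = T *v z - (v \<bullet> z) *\<^sub>R u" for z
    by (simp add: matrix_vector_mult_diff_rdistrib outer_mult_vector)
  have "\<alpha> \<noteq> 1"
  proof
    assume "\<alpha> = 1"
    then have "(T - outer u v) *v (Ti *v u) = (T - outer u v) *v 0"
      unfolding Qmv TTi \<alpha>_def by simp
    then have "Ti *v u = 0" using inj_matrix_vector_mult[OF Q] by (metis injD)
    then show False using \<open>\<alpha> = 1\<close> unfolding \<alpha>_def by simp
  qed
  show "(T - outer u v) ** (Ti + (1 / (1 - \<alpha>)) *\<^sub>R (Ti ** outer u v ** Ti)) = mat 1"
    unfolding \<alpha>_def[symmetric]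
  proof (rule iffD2[OF matrix_eq], rule allI)
    fix z
    define s t where "s = 1 / (1 - \<alpha>)" and "t = v \<bullet> (Ti *v z)"
    have "(Ti + s *\<^sub>R (Ti ** outer u v ** Ti)) *v z = Ti *v z + (s * t) *\<^sub>R (Ti *v u)"
      by (simp add: t_def matrix_vector_mult_add_rdistrib scaleR_matrix_vector_assoc[symmetric]
          matrix_vector_mul_assoc[symmetric] outer_mult_vector matrix_vector_mult_scaleR)
    then have "((T - outer u v) ** (Ti + s *\<^sub>R (Ti ** outer u v ** Ti))) *v z
        = z - t *\<^sub>R u + (s * t) *\<^sub>R (u - \<alpha> *\<^sub>R u)"
      by (simp add: matrix_vector_mul_assoc[symmetric] matrix_vector_right_distrib
          matrix_vector_mult_scaleR Qmv TTi t_def \<alpha>_def)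
    also have "\<dots> = z + (t * (s * (1 - \<alpha>) - 1)) *\<^sub>R u"
      by (simp add: algebra_simps)
    also have "\<dots> = mat 1 *v z" using \<open>\<alpha> \<noteq> 1\<close> by (simp add: s_def)
    finally show "((T - outer u v) ** (Ti + s *\<^sub>R (Ti ** outer u v ** Ti))) *v z = mat 1 *v z" .
  qed
qed

lemma wnorm2_diff_scaleR:
  assumes "transpose M = M"
  shows "wnorm2 M (w - \<beta> *\<^sub>R d) = wnorm2 M w - 2 * \<beta> * winner M d w + \<beta>\<^sup>2 * wnorm2 M d"
  using symmetric_inner_commute[OF assms, of w d]
  by (simp add: wnorm2_def winner_def inner_diff_left inner_diff_right
      matrix_vector_mult_diff_distrib matrix_vector_mult_scaleR power2_eq_square algebra_simps)

lemma wnorm2_diff_scaleR_argmin: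
  fixes M :: "real^'n^'n" and d w :: "real^'n"
  assumes "transpose M = M" and "0 < wnorm2 M d"
  defines "\<beta>' \<equiv> winner M d w / winner M d d"
  shows "wnorm2 M (w - \<beta>' *\<^sub>R d) = wnorm2 M w - (winner M d w)\<^sup>2 / wnorm2 M d"
    and "wnorm2 M (w - \<beta>' *\<^sub>R d) \<le> wnorm2 M (w - \<beta> *\<^sub>R d)"
proof -
  have D: "winner M d d = wnorm2 M d" by (simp add: winner_def wnorm2_def)
  show "wnorm2 M (w - \<beta>' *\<^sub>R d) = wnorm2 M w - (winner M d w)\<^sup>2 / wnorm2 M d"
    unfolding wnorm2_diff_scaleR[OF assms(1)] \<beta>'_def D
    using assms(2) by (simp add: field_simps power2_eq_square)
  moreover have "wnorm2 M (w - \<beta> *\<^sub>R d) - (wnorm2 M w - (winner M d w)\<^sup>2 / wnorm2 M d)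
      = wnorm2 M d * (\<beta> - winner M d w / wnorm2 M d)\<^sup>2"
    unfolding wnorm2_diff_scaleR[OF assms(1)]
    using assms(2) by (simp add: field_simps power2_eq_square)
  moreover have "0 \<le> wnorm2 M d * (\<beta> - winner M d w / wnorm2 M d)\<^sup>2"
    using assms(2) by simp
  ultimately show "wnorm2 M (w - \<beta>' *\<^sub>R d) \<le> wnorm2 M (w - \<beta> *\<^sub>R d)" by linarith
qed

lemma spd_winner_Cauchy_Schwarz:
  assumes "spd M"
  shows "(winner M d w)\<^sup>2 \<le> wnorm2 M d * wnorm2 M w"
proof (cases "d = 0")
  case False
  then have D: "0 < wnorm2 M d" using assms by (simp add: spd_def wnorm2_def)
  have "0 \<le> wnorm2 M (w - (winner M d w / winner M d d) *\<^sub>R d)"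
    using assms unfolding spd_def wnorm2_def by (metis inner_zero_left order_le_less)
  then have "(winner M d w)\<^sup>2 / wnorm2 M d \<le> wnorm2 M w"
    using wnorm2_diff_scaleR_argmin(1)[of M d w] assms D by (simp add: spd_def)
  then show ?thesis using D by (simp add: divide_le_eq mult.commute)
qed (simp add: winner_def wnorm2_def)

lemma wnorm2_minus_normalized_outer:
  assumes "transpose M = M" and "0 \<le> wnorm2 M d"
  defines "u \<equiv> (1 / sqrt (wnorm2 M d)) *\<^sub>R (M *v d)"
  shows "wnorm2 (T - outer u u) w = wnorm2 T w - (winner M d w)\<^sup>2 / wnorm2 M d"
proof -
  have "u \<bullet> w = winner M d w / sqrt (wnorm2 M d)"
    using symmetric_inner_commute[OF assms(1), of w d]
    by (simp add: u_def winner_def inner_commute)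
  then have "(u \<bullet> w)\<^sup>2 = (winner M d w)\<^sup>2 / wnorm2 M d"
    using assms(2) by (simp add: power_divide)
  then show ?thesis
    by (simp add: wnorm2_def matrix_vector_mult_diff_rdistrib inner_diff_right outer_mult_vector
        power2_eq_square inner_commute)
qed

lemma spd_minus_normalized_outer:
  fixes H M :: "real^'n^'n"
  assumes "spd H" and "spd M" and "d \<noteq> 0"
  defines "u \<equiv> (1 / sqrt (wnorm2 M d)) *\<^sub>R (M *v d)"
  shows "spd (H + M - outer u u)"
  unfolding spd_def
proof (intro conjI allI impI)
  show "transpose (H + M - outer u u) = H + M - outer u u"
    using assms(1,2) transpose_outer[of u u]
    by (simp add: spd_def vec_eq_iff transpose_def)
next
  fix w :: "real^'n" assume "w \<noteq> 0"
  have symM: "transpose M = M" and D: "0 < wnorm2 M d"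
    using assms(2,3) by (simp_all add: spd_def wnorm2_def)
  have "(winner M d w)\<^sup>2 / wnorm2 M d \<le> wnorm2 M w"
    using spd_winner_Cauchy_Schwarz[OF assms(2), of d w] D by (simp add: divide_le_eq mult.commute)
  moreover have "0 < wnorm2 H w" using assms(1) \<open>w \<noteq> 0\<close> by (simp add: spd_def wnorm2_def)
  moreover have "wnorm2 (H + M - outer u u) w = wnorm2 H w + wnorm2 M w - (winner M d w)\<^sup>2 / wnorm2 M d"
    using wnorm2_minus_normalized_outer[OF symM, of d "H + M" w] D
    by (simp add: u_def wnorm2_def matrix_vector_mult_add_rdistrib inner_add_right)
  ultimately show "0 < w \<bullet> ((H + M - outer u u) *v w)" by (simp add: wnorm2_def)
qed

lemma wnorm2_add_matrix_inv:
  fixes Q :: "real^'n^'n"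
  assumes "transpose Q = Q" and "invertible Q"
  shows "wnorm2 Q (w + matrix_inv Q *v p) = wnorm2 Q w + 2 * (p \<bullet> w) + p \<bullet> (matrix_inv Q *v p)"
proof -
  have Qv: "Q *v (matrix_inv Q *v p) = p" using assms(2) by (rule matrix_inv_cancel)
  have "(matrix_inv Q *v p) \<bullet> (Q *v w) = p \<bullet> w"
    using symmetric_inner_commute[OF assms(1), of "matrix_inv Q *v p" w] Qv by (simp add: inner_commute)
  then show ?thesis
    using Qv by (simp add: wnorm2_def inner_add_left inner_add_right matrix_vector_right_distrib inner_commute)
qed

lemma grad_eqI:
  assumes "GDERIV f x :> D"
  shows "grad f x = D"
  unfolding grad_def
proof (rule the_equality)
  fix D' assume "GDERIV f x :> D'"
  then have "(\<lambda>h. h \<bullet> D') = (\<lambda>h. h \<bullet> D)"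
    using assms unfolding gderiv_def by (rule has_derivative_unique)
  then have "(D' - D) \<bullet> D' = (D' - D) \<bullet> D" by metis
  then have "(D' - D) \<bullet> (D' - D) = 0" by (simp add: inner_diff_right)
  then show "D' = D" by simp
qed (fact assms)

lemma grad_quadratic:
  fixes H :: "real^'n^'n"
  assumes "transpose H = H" and "\<forall>x. f x = (1/2) * (x \<bullet> (H *v x)) + b \<bullet> x + c"
  shows "grad f y = H *v y + b"
proof (rule grad_eqI)
  have "f = (\<lambda>x. (1/2) * (x \<bullet> (H *v x)) + b \<bullet> x + c)" using assms(2) by auto
  moreover have "((\<lambda>x. (1/2) * (x \<bullet> (H *v x)) + b \<bullet> x + c) has_derivative
      (\<lambda>h. (1/2) * (y \<bullet> (H *v h) + h \<bullet> (H *v y)) + b \<bullet> h + 0)) (at y)"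
    by (intro has_derivative_add has_derivative_mult_right has_derivative_inner has_derivative_ident
        has_derivative_const bounded_linear_imp_has_derivative matrix_vector_mul_bounded_linear
        has_derivative_inner_right[OF has_derivative_ident, THEN has_derivative_eq_rhs]) simp
  moreover have "(\<lambda>h. (1/2) * (y \<bullet> (H *v h) + h \<bullet> (H *v y)) + b \<bullet> h + 0) = (\<lambda>h. h \<bullet> (H *v y + b))"
    using symmetric_inner_commute[OF assms(1)] by (auto simp: inner_add_right inner_commute)
  ultimately show "GDERIV f y :> H *v y + b" by (simp add: gderiv_def)
qed

lemma quadratic_expansion:
  fixes H :: "real^'n^'n"
  assumes "transpose H = H" and "\<forall>x. f x = (1/2) * (x \<bullet> (H *v x)) + b \<bullet> x + c"
  shows "f (v + z) = f v + grad f v \<bullet> z + (1/2) * wnorm2 H z"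
  using symmetric_inner_commute[OF assms(1), of z v]
  by (simp add: assms grad_quadratic[OF assms] wnorm2_def inner_add_left inner_add_right
      matrix_vector_right_distrib inner_commute algebra_simps)

lemma quadratic_linearization_wnorm2:
  fixes H :: "real^'n^'n"
  assumes "transpose H = H" and "\<forall>x. f x = (1/2) * (x \<bullet> (H *v x)) + b \<bullet> x + c"
  shows "f y + grad f y \<bullet> (x - y) + (1/2) * wnorm2 T (x - y) = f x + (1/2) * wnorm2 (T - H) (x - y)"
  using quadratic_expansion[OF assms, of y "x - y"]
  by (simp add: wnorm2_def matrix_vector_mult_diff_rdistrib inner_diff_right algebra_simps)

lemma joint_minimizers_eq_partial_minimizers:
  fixes \<Phi> :: "'a \<Rightarrow> 'b \<Rightarrow> 'c::linorder"
  assumes "\<And>x \<beta>. \<Phi> x (\<beta>' x) \<le> \<Phi> x \<beta>"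
  shows "{x. \<exists>\<beta>. \<forall>x' \<beta>''. \<Phi> x \<beta> \<le> \<Phi> x' \<beta>''} = {x. \<forall>x'. \<Phi> x (\<beta>' x) \<le> \<Phi> x' (\<beta>' x')}"
  using assms by (blast intro: order_trans)

lemma minimizers_add_ereal_const:
  "{x. \<forall>x'. F x + ereal C \<le> F x' + ereal C} = {x. \<forall>x'. F x \<le> F x'}"
  by (simp add: ereal_add_le_add_iff2)

lemma quadratic_partial_min_value:
  fixes H T :: "real^'n^'n" and xk d x :: "real^'n"
  defines "M \<equiv> T - H"
  defines "u \<equiv> (1 / sqrt (wnorm2 M d)) *\<^sub>R (M *v d)"
  defines "Q \<equiv> T - outer u u"
  assumes symH: "transpose H = H" and symT: "transpose T = T"
    and f: "\<forall>x. f x = (1/2) * (x \<bullet> (H *v x)) + b \<bullet> x + c"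
    and D: "0 < wnorm2 M d" and invQ: "invertible Q"
  shows "f x + (1/2) * wnorm2 M (x - xk - (winner M d (x - xk) / winner M d d) *\<^sub>R d)
    = (1/2) * wnorm2 Q (x - xk + matrix_inv Q *v grad f xk)
      + (f xk - (1/2) * (grad f xk \<bullet> (matrix_inv Q *v grad f xk)))"
proof -
  define w where "w = x - xk"
  have symM: "transpose M = M" using symH symT by (simp add: M_def vec_eq_iff transpose_def)
  have symQ: "transpose Q = Q" using symT transpose_outer[of u u]
    by (simp add: Q_def vec_eq_iff transpose_def)
  have "f x = f xk + grad f xk \<bullet> w + (1/2) * wnorm2 H w"
    using quadratic_expansion[OF symH f, of xk w] by (simp add: w_def)
  moreover have "wnorm2 M (w - (winner M d w / winner M d d) *\<^sub>R d)
      = wnorm2 M w - (winner M d w)\<^sup>2 / wnorm2 M d"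
    using wnorm2_diff_scaleR_argmin(1)[OF symM D] .
  moreover have "wnorm2 Q w = wnorm2 T w - (winner M d w)\<^sup>2 / wnorm2 M d"
    using wnorm2_minus_normalized_outer[OF symM, of d T w] D by (simp add: Q_def u_def)
  moreover have "wnorm2 T w = wnorm2 H w + wnorm2 M w"
    by (simp add: wnorm2_def M_def matrix_vector_mult_diff_rdistrib inner_diff_right)
  moreover have "wnorm2 Q (w + matrix_inv Q *v grad f xk)
      = wnorm2 Q w + 2 * (grad f xk \<bullet> w) + grad f xk \<bullet> (matrix_inv Q *v grad f xk)"
    using wnorm2_add_matrix_inv[OF symQ invQ] .
  ultimately show ?thesis by (simp add: w_def[symmetric] diff_diff_eq2 algebra_simps)
qed

theorem mainTheorem2:
  fixes g :: "real^'n \<Rightarrow> ereal" and f :: "real^'n \<Rightarrow> real"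
    and H T :: "real^'n^'n" and b xk d :: "real^'n" and c :: real
  assumes g_proper: "proper_fun g" and g_lsc: "lsc_fun g"
    and f_C1: "\<forall>x. f differentiable (at x)" "continuous_on UNIV (grad f)"
    and f_lip: "\<exists>L S. spd L \<and> spd S \<and> S ** S = matrix_inv L
                     \<and> lipschitz_on 1 UNIV (grad (\<lambda>z. f (S *v z)))"
    and bdd: "\<exists>m. \<forall>x. ereal m \<le> ereal (f x) + g x"
    and f_quad: "\<forall>x. f x = (1/2) * (x \<bullet> (H *v x)) + b \<bullet> x + c"
    and H_spd: "spd H"
    and d_nz: "d \<noteq> 0"
    and T_spd: "spd T" and M_spd: "spd (T - H)"
  shows
    "let M = T - H;
         y = (\<lambda>\<beta>::real. xk + \<beta> *\<^sub>R d);
         \<Phi> = (\<lambda>x \<beta>. lin_model g f x (y \<beta>) + ereal ((1/2) * wnorm2 T (x - y \<beta>)));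
         u = (1 / sqrt (wnorm2 M d)) *\<^sub>R (M *v d);
         Q = T - outer u u;
         Ti = matrix_inv T
     in (\<forall>x \<beta>. \<Phi> x (winner M d (x - xk) / winner M d d) \<le> \<Phi> x \<beta>)
      \<and> {x. \<exists>\<beta>. \<forall>x' \<beta>'. \<Phi> x \<beta> \<le> \<Phi> x' \<beta>'}
        = {x. \<forall>x'. g x + ereal ((1/2) * wnorm2 Q (x - xk + matrix_inv Q *v grad f xk))
                   \<le> g x' + ereal ((1/2) * wnorm2 Q (x' - xk + matrix_inv Q *v grad f xk))}
      \<and> invertible Q
      \<and> matrix_inv Q = Ti + (1 / (1 - u \<bullet> (Ti *v u))) *\<^sub>R (Ti ** outer u u ** Ti)"
proof -
  define M where "M = T - H"
  define u where "u = (1 / sqrt (wnorm2 M d)) *\<^sub>R (M *v d)"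
  define Q where "Q = T - outer u u"
  define \<Phi> where "\<Phi> x \<beta> =
    lin_model g f x (xk + \<beta> *\<^sub>R d) + ereal ((1/2) * wnorm2 T (x - (xk + \<beta> *\<^sub>R d)))" for x \<beta>
  define \<beta>' where "\<beta>' x = winner M d (x - xk) / winner M d d" for x
  define G where "G x = g x + ereal ((1/2) * wnorm2 Q (x - xk + matrix_inv Q *v grad f xk))" for x
  have symH: "transpose H = H" and symT: "transpose T = T" and symM: "transpose M = M"
    and D: "0 < wnorm2 M d"
    using H_spd T_spd M_spd d_nz by (simp_all add: spd_def M_def wnorm2_def)
  have "spd Q"
    using spd_minus_normalized_outer[OF H_spd M_spd d_nz] by (simp add: Q_def u_def M_def)
  then have invQ: "invertible Q" by (rule spd_invertible)
  have \<Phi>_eq: "\<Phi> x \<beta> = g x + ereal (f x + (1/2) * wnorm2 M (x - xk - \<beta> *\<^sub>R d))" for x \<beta>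
    using quadratic_linearization_wnorm2[OF symH f_quad, where y = "xk + \<beta> *\<^sub>R d" and T = T]
    by (simp add: \<Phi>_def lin_model_def M_def add.assoc diff_diff_eq)
  have \<beta>'_min: "\<Phi> x (\<beta>' x) \<le> \<Phi> x \<beta>" for x \<beta>
    using wnorm2_diff_scaleR_argmin(2)[OF symM D, of "x - xk" \<beta>]
    by (simp add: \<Phi>_eq \<beta>'_def add_left_mono)
  have "\<Phi> x (\<beta>' x) = G x + ereal (f xk - (1/2) * (grad f xk \<bullet> (matrix_inv Q *v grad f xk)))" for x
    using quadratic_partial_min_value[OF symH symT f_quad, of d,
        folded M_def, folded u_def, folded Q_def, OF D invQ, of x xk]
    by (simp add: \<Phi>_eq \<beta>'_def G_def add.assoc)
  then have "{x. \<exists>\<beta>. \<forall>x' \<beta>''. \<Phi> x \<beta> \<le> \<Phi> x' \<beta>''} = {x. \<forall>x'. G x \<le> G x'}"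
    using joint_minimizers_eq_partial_minimizers[of \<Phi> \<beta>', OF \<beta>'_min] minimizers_add_ereal_const
    by simp
  moreover have "matrix_inv Q = matrix_inv T
      + (1 / (1 - u \<bullet> (matrix_inv T *v u))) *\<^sub>R (matrix_inv T ** outer u u ** matrix_inv T)"
    using matrix_inv_minus_outer[OF spd_invertible[OF T_spd]] invQ by (simp add: Q_def)
  ultimately show ?thesis
    using \<beta>'_min invQ unfolding Let_def
    by (simp add: \<Phi>_def \<beta>'_def G_def Q_def u_def M_def)
qed

end
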